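(* Let $q$ be a prime power and let $t$ be a positive integer with $t\mid q-1$. Let $\mathbb{F}=\mathrm{GF}(q^2)$ and let $H\subseteq\mathbb{F}^\ast$ be the subgroup of the multiplicative group of order $t(q+1)$. Let $G(q^2,t(q+1))$ be the graph whose vertex set is $(\mathbb{F}\times\mathbb{F}\setminus\{(0,0)\})/\sim$, where $(a_1,b_1)\sim(a_2,b_2)$ iff there is $h\in H$ with $a_1=ha_2$ and $b_1=hb_2$, and in which two distinct vertices $\langle a,b\rangle$ and $\langle x,y\rangle$ are adjacent iff $ax+by\in H$. Then $G(q^2,t(q+1))$ is $K_{3,2t^2+1}$-free.
   Context: $\langle a,b\rangle$ denotes the equivalence class of $(a,b)$; adjacency is independent of representatives; the graph is simple (no loops). A graph is $K_{s,u}$-free if it contains no (not necessarily induced) subgraph isomorphic to the complete bipartite graph $K_{s,u}$. *)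

theory Defs
  imports "HOL-Computational_Algebra.Primes"
begin

definition Hrel :: "'a::field set \<Rightarrow> (('a \<times> 'a) \<times> ('a \<times> 'a)) set" where
  "Hrel H = {((a1, b1), (a2, b2)). \<exists>h\<in>H. a1 = h * a2 \<and> b1 = h * b2}"

definition G_vertices :: "'a::field set \<Rightarrow> ('a \<times> 'a) set set" where
  "G_vertices H = (UNIV - {(0, 0)}) // Hrel H"

definition G_adj :: "'a::field set \<Rightarrow> ('a \<times> 'a) set \<Rightarrow> ('a \<times> 'a) set \<Rightarrow> bool" where
  "G_adj H u v = (u \<noteq> v \<and> (\<exists>(a, b)\<in>u. \<exists>(x, y)\<in>v. a * x + b * y \<in> H))"

definition K_free :: "'v set \<Rightarrow> ('v \<Rightarrow> 'v \<Rightarrow> bool) \<Rightarrow> nat \<Rightarrow> nat \<Rightarrow> bool" where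
  "K_free V E s u = (\<not> (\<exists>S U. S \<subseteq> V \<and> U \<subseteq> V \<and> S \<inter> U = {} \<and> finite S \<and> finite U \<and>
       card S = s \<and> card U = u \<and> (\<forall>x\<in>S. \<forall>y\<in>U. E x y)))"

end

theory Submission
  imports Defs "HOL-Number_Theory.Residues" "HOL-Computational_Algebra.Polynomial"
begin

text \<open>
  Representatives \<open>p\<^sub>1, p\<^sub>2, p\<^sub>3\<close> of three vertices with a common neighbour are pairwise
  linearly independent, so as linear forms \<open>p\<^sub>3 = \<alpha> p\<^sub>1 + \<beta> p\<^sub>2\<close> with \<open>\<alpha>, \<beta> \<noteq> 0\<close>. A common
  neighbour \<open>\<langle>r\<rangle>\<close> gives \<open>h = (p\<^sub>2\<cdot>r)/(p\<^sub>1\<cdot>r) \<in> H\<close> with \<open>\<alpha> + \<beta> h \<in> H\<close>, and \<open>h\<close> determines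
  \<open>\<langle>r\<rangle>\<close>. Every \<open>x \<in> H\<close> satisfies \<open>(x\<^sup>q\<^sup>+\<^sup>1)\<^sup>t = 1\<close>, so the norms \<open>h\<^sup>q\<^sup>+\<^sup>1\<close> and \<open>(\<alpha> + \<beta> h)\<^sup>q\<^sup>+\<^sup>1\<close>
  take at most \<open>t\<close> values each. As \<open>x \<mapsto> x\<^sup>q\<close> is additive, fixing both norms turns
  \<open>(\<alpha> + \<beta> h)\<^sup>q (\<alpha> + \<beta> h) h = n\<^sub>2 h\<close> into a quadratic equation in \<open>h\<close> with leading
  coefficient \<open>\<alpha>\<^sup>q \<beta>\<close>. Hence there are at most \<open>2t\<^sup>2\<close> common neighbours.
\<close>

section \<open>Counting in a finite field\<close>

lemma add_power_prime_power:
  fixes x y :: "'a::{field,finite}"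
  assumes p: "prime p" and card: "card (UNIV :: 'a set) = p ^ n"
  shows "(x + y) ^ (p ^ k) = x ^ (p ^ k) + y ^ (p ^ k)"
proof -
  have prime_char: "prime CHAR('a)"
    by (rule prime_CHAR_semidom) (simp add: finite_imp_CHAR_pos)
  have "CHAR('a) dvd p ^ n"
    using CHAR_dvd_CARD[where 'a='a] card by simp
  hence "CHAR('a) = p"
    using prime_char p prime_dvd_power primes_dvd_imp_eq by blast
  thus ?thesis
    using freshmans_dream'[OF prime_char] by simp
qed

lemma power_card_eq_1:
  fixes H :: "'a::field set"
  assumes "finite H" and "0 \<notin> H" and mult: "\<And>x y. x \<in> H \<Longrightarrow> y \<in> H \<Longrightarrow> x * y \<in> H"
    and h: "h \<in> H"
  shows "h ^ card H = 1"
proof -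
  have inj: "inj_on ((*) h) H"
    using h \<open>0 \<notin> H\<close> by (auto simp: inj_on_def)
  have "(*) h ` H = H"
    using card_image[OF inj] mult h \<open>finite H\<close> by (intro card_subset_eq) auto
  hence "\<Prod>H = (\<Prod>x\<in>H. h * x)"
    using prod.reindex[OF inj, of id] by simp
  also have "\<dots> = h ^ card H * \<Prod>H"
    by (simp add: prod.distrib)
  finally show ?thesis
    using \<open>finite H\<close> \<open>0 \<notin> H\<close> by auto
qed

lemma card_quadratic_roots_le_2:
  fixes A B C :: "'a::field"
  assumes "A \<noteq> 0"
  shows "card {h. A * h\<^sup>2 + B * h + C = 0} \<le> 2"
proof -
  have "card {h. poly [:C, B, A:] h = 0} \<le> degree [:C, B, A:]"
    by (rule card_poly_roots_bound) (use assms in auto)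
  moreover have "{h. poly [:C, B, A:] h = 0} = {h. A * h\<^sup>2 + B * h + C = 0}"
    by (auto simp: algebra_simps power2_eq_square)
  ultimately show ?thesis
    using assms by simp
qed

lemma card_roots_of_unity_le:
  assumes "t > 0"
  shows "card {w :: 'a::field. w ^ t = 1} \<le> t"
proof -
  let ?P = "monom (1::'a) t + [:-1:]"
  have degree: "degree ?P = t"
    using assms by (subst degree_add_eq_left) (auto simp: degree_monom_eq)
  hence "?P \<noteq> 0"
    using assms by auto
  hence "card {w. poly ?P w = 0} \<le> t"
    using card_poly_roots_bound degree by metis
  thus ?thesis
    by (simp add: poly_monom)
qed

lemma card_norm_fibre_le_2:
  fixes \<alpha> \<beta> n\<^sub>1 n\<^sub>2 :: "'a::{field,finite}"
  assumes additive: "\<And>x y :: 'a. (x + y) ^ q = x ^ q + y ^ q"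
    and "\<alpha> \<noteq> 0" "\<beta> \<noteq> 0" "n\<^sub>1 \<noteq> 0"
  shows "card {h. h ^ (q + 1) = n\<^sub>1 \<and> (\<alpha> + \<beta> * h) ^ (q + 1) = n\<^sub>2} \<le> 2"
proof -
  let ?A = "\<alpha> ^ q * \<beta>" and ?B = "\<alpha> ^ (q + 1) + \<beta> ^ (q + 1) * n\<^sub>1 - n\<^sub>2"
    and ?C = "\<beta> ^ q * n\<^sub>1 * \<alpha>"
  have "{h. h ^ (q + 1) = n\<^sub>1 \<and> (\<alpha> + \<beta> * h) ^ (q + 1) = n\<^sub>2}
      \<subseteq> {h. ?A * h\<^sup>2 + ?B * h + ?C = 0}"
  proof
    fix h
    assume "h \<in> {h. h ^ (q + 1) = n\<^sub>1 \<and> (\<alpha> + \<beta> * h) ^ (q + 1) = n\<^sub>2}"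
    hence n\<^sub>1: "h ^ (q + 1) = n\<^sub>1" and n\<^sub>2: "(\<alpha> + \<beta> * h) ^ (q + 1) = n\<^sub>2"
      by auto
    have "n\<^sub>2 = (\<alpha> ^ q + \<beta> ^ q * h ^ q) * (\<alpha> + \<beta> * h)"
      using n\<^sub>2 by (simp add: additive power_mult_distrib mult.commute)
    hence "n\<^sub>2 * h = (\<alpha> ^ q * h + \<beta> ^ q * (h ^ q * h)) * (\<alpha> + \<beta> * h)"
      by (simp add: algebra_simps)
    also have "h ^ q * h = n\<^sub>1"
      using n\<^sub>1 by (simp add: mult.commute)
    finally have "n\<^sub>2 * h = (\<alpha> ^ q * h + \<beta> ^ q * n\<^sub>1) * (\<alpha> + \<beta> * h)" .
    moreover have "?A * h\<^sup>2 + ?B * h + ?C = (\<alpha> ^ q * h + \<beta> ^ q * n\<^sub>1) * (\<alpha> + \<beta> * h) - n\<^sub>2 * h"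
      by (simp add: algebra_simps power2_eq_square)
    ultimately show "h \<in> {h. ?A * h\<^sup>2 + ?B * h + ?C = 0}"
      by simp
  qed
  hence "card {h. h ^ (q + 1) = n\<^sub>1 \<and> (\<alpha> + \<beta> * h) ^ (q + 1) = n\<^sub>2}
      \<le> card {h. ?A * h\<^sup>2 + ?B * h + ?C = 0}"
    by (intro card_mono) simp_all
  also have "\<dots> \<le> 2"
    by (rule card_quadratic_roots_le_2) (use assms in simp)
  finally show ?thesis .
qed

lemma card_affine_preimage_le:
  fixes H :: "'a::{field,finite} set"
  assumes additive: "\<And>x y :: 'a. (x + y) ^ q = x ^ q + y ^ q"
    and "0 \<notin> H" and mult: "\<And>x y. x \<in> H \<Longrightarrow> y \<in> H \<Longrightarrow> x * y \<in> H"
    and card_H: "card H = t * (q + 1)" and "t > 0" and "\<alpha> \<noteq> 0" "\<beta> \<noteq> 0"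
  shows "card {h \<in> H. \<alpha> + \<beta> * h \<in> H} \<le> 2 * t\<^sup>2"
proof -
  define T where "T = {w :: 'a. w ^ t = 1}"
  define fibre where
    "fibre n = {h. h ^ (q + 1) = fst n \<and> (\<alpha> + \<beta> * h) ^ (q + 1) = snd n}" for n
  have norm_in_T: "x ^ (q + 1) \<in> T" if "x \<in> H" for x
  proof -
    have "(x ^ (q + 1)) ^ t = x ^ card H"
      unfolding card_H by (metis power_mult mult.commute)
    thus ?thesis
      using power_card_eq_1[OF _ \<open>0 \<notin> H\<close> mult that] by (simp add: T_def)
  qed
  have "{h \<in> H. \<alpha> + \<beta> * h \<in> H} \<subseteq> (\<Union>n \<in> T \<times> T. fibre n)"
  proof
    fix h
    assume "h \<in> {h \<in> H. \<alpha> + \<beta> * h \<in> H}"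
    hence "(h ^ (q + 1), (\<alpha> + \<beta> * h) ^ (q + 1)) \<in> T \<times> T"
      using norm_in_T by blast
    moreover have "h \<in> fibre (h ^ (q + 1), (\<alpha> + \<beta> * h) ^ (q + 1))"
      by (simp add: fibre_def)
    ultimately show "h \<in> (\<Union>n \<in> T \<times> T. fibre n)"
      by blast
  qed
  hence "card {h \<in> H. \<alpha> + \<beta> * h \<in> H} \<le> card (\<Union>n \<in> T \<times> T. fibre n)"
    by (intro card_mono) simp_all
  also have "\<dots> \<le> (\<Sum>n \<in> T \<times> T. card (fibre n))"
    by (rule card_UN_le) simp
  also have "\<dots> \<le> (\<Sum>n \<in> T \<times> T. 2)"
  proof (rule sum_mono)
    fix n assume "n \<in> T \<times> T"
    hence "fst n \<noteq> 0"
      using \<open>t > 0\<close> by (auto simp: T_def power_0_left)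
    thus "card (fibre n) \<le> 2"
      unfolding fibre_def by (rule card_norm_fibre_le_2[OF additive \<open>\<alpha> \<noteq> 0\<close> \<open>\<beta> \<noteq> 0\<close>])
  qed
  also have "\<dots> = 2 * (card T)\<^sup>2"
    by (simp add: card_cartesian_product power2_eq_square)
  also have "\<dots> \<le> 2 * t\<^sup>2"
    using card_roots_of_unity_le[OF \<open>t > 0\<close>] by (simp add: T_def power_mono)
  finally show ?thesis .
qed

section \<open>Linear forms on the plane\<close>

definition dot :: "'a::field \<times> 'a \<Rightarrow> 'a \<times> 'a \<Rightarrow> 'a" where
  "dot p r = fst p * fst r + snd p * snd r"

definition det2 :: "'a::field \<times> 'a \<Rightarrow> 'a \<times> 'a \<Rightarrow> 'a" where
  "det2 p r = fst p * snd r - fst r * snd p"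

lemma dot_Cramer:
  assumes "det2 p\<^sub>1 p\<^sub>2 \<noteq> 0"
  shows "dot p\<^sub>3 r = det2 p\<^sub>3 p\<^sub>2 / det2 p\<^sub>1 p\<^sub>2 * dot p\<^sub>1 r + det2 p\<^sub>1 p\<^sub>3 / det2 p\<^sub>1 p\<^sub>2 * dot p\<^sub>2 r"
proof -
  have "det2 p\<^sub>1 p\<^sub>2 * dot p\<^sub>3 r = det2 p\<^sub>3 p\<^sub>2 * dot p\<^sub>1 r + det2 p\<^sub>1 p\<^sub>3 * dot p\<^sub>2 r"
    by (simp add: dot_def det2_def algebra_simps)
  thus ?thesis
    using assms by (simp add: field_simps)
qed

lemma scaled_if_dots_scaled:
  assumes "det2 p\<^sub>1 p\<^sub>2 \<noteq> 0" and "dot p\<^sub>1 r' = c * dot p\<^sub>1 r" "dot p\<^sub>2 r' = c * dot p\<^sub>2 r"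
  shows "r' = (c * fst r, c * snd r)"
proof -
  have "det2 p\<^sub>1 p\<^sub>2 * (fst r' - c * fst r)
      = snd p\<^sub>2 * (dot p\<^sub>1 r' - c * dot p\<^sub>1 r) - snd p\<^sub>1 * (dot p\<^sub>2 r' - c * dot p\<^sub>2 r)"
    by (simp add: dot_def det2_def algebra_simps)
  moreover have "det2 p\<^sub>1 p\<^sub>2 * (snd r' - c * snd r)
      = fst p\<^sub>1 * (dot p\<^sub>2 r' - c * dot p\<^sub>2 r) - fst p\<^sub>2 * (dot p\<^sub>1 r' - c * dot p\<^sub>1 r)"
    by (simp add: dot_def det2_def algebra_simps)
  ultimately show ?thesis
    using assms by (cases r') simp
qed

lemma scalar_multiple_if_det2_eq_0:
  assumes "p \<noteq> (0, 0)" and "det2 p p' = 0"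
  shows "\<exists>l. p' = (l * fst p, l * snd p)"
proof (cases "fst p = 0")
  case True
  hence "snd p \<noteq> 0" and "fst p' = 0"
    using assms by (cases p; auto simp: det2_def)+
  thus ?thesis
    using True by (intro exI[of _ "snd p' / snd p"]) (simp add: prod_eq_iff)
next
  case False
  hence "snd p' = fst p' / fst p * snd p"
    using assms(2) by (simp add: det2_def field_simps)
  thus ?thesis
    using False by (intro exI[of _ "fst p' / fst p"]) (simp add: prod_eq_iff)
qed

section \<open>Common neighbours in the graph\<close>

definition H_orbit :: "'a::field set \<Rightarrow> 'a \<times> 'a \<Rightarrow> ('a \<times> 'a) set" where
  "H_orbit H p = {(h * fst p, h * snd p) | h. h \<in> H}"

locale mult_subgroup =
  fixes H :: "'a::field set"
  assumes zero_notin: "0 \<notin> H"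
    and mult_in: "\<And>x y. x \<in> H \<Longrightarrow> y \<in> H \<Longrightarrow> x * y \<in> H"
    and inverse_in: "\<And>x. x \<in> H \<Longrightarrow> inverse x \<in> H"
begin

lemma nonzero: "x \<in> H \<Longrightarrow> x \<noteq> 0"
  using zero_notin by blast

lemma divide_in: "x \<in> H \<Longrightarrow> y \<in> H \<Longrightarrow> x / y \<in> H"
  by (simp add: divide_inverse mult_in inverse_in)

lemma Image_Hrel_eq_H_orbit: "Hrel H `` {p} = H_orbit H p"
proof (intro Set.set_eqI iffI)
  fix r
  assume "r \<in> Hrel H `` {p}"
  then obtain h where "h \<in> H" "fst p = h * fst r" "snd p = h * snd r"
    by (auto simp: Hrel_def)
  moreover from this have "r = (inverse h * fst p, inverse h * snd p)"
    by (simp add: nonzero prod_eq_iff)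
  ultimately show "r \<in> H_orbit H p"
    unfolding H_orbit_def using inverse_in by blast
next
  fix r
  assume "r \<in> H_orbit H p"
  then obtain h where "h \<in> H" "fst r = h * fst p" "snd r = h * snd p"
    by (auto simp: H_orbit_def)
  moreover from this have "fst p = inverse h * fst r" "snd p = inverse h * snd r"
    by (simp_all add: nonzero)
  ultimately show "r \<in> Hrel H `` {p}"
    unfolding Hrel_def using inverse_in by (cases p, cases r) auto
qed

lemma G_vertices_eq: "G_vertices H = H_orbit H ` (UNIV - {(0, 0)})"
  unfolding G_vertices_def quotient_def by (auto simp: Image_Hrel_eq_H_orbit)

lemma H_orbit_eq_if_mem:
  assumes "r \<in> H_orbit H p"
  shows "H_orbit H r = H_orbit H p"
proof -
  obtain g where g: "g \<in> H" "r = (g * fst p, g * snd p)"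
    using assms by (auto simp: H_orbit_def)
  have "(h * fst r, h * snd r) = (h * g * fst p, h * g * snd p)" for h
    using g by simp
  moreover have "(h * fst p, h * snd p) = (h / g * fst r, h / g * snd r)" for h
    using g by (simp add: nonzero)
  ultimately show ?thesis
    unfolding H_orbit_def using g(1) mult_in divide_in by blast
qed

lemma dot_in_if_G_adj:
  assumes "G_adj H (H_orbit H p) (H_orbit H r)"
  shows "dot p r \<in> H"
proof -
  obtain g g' where "g \<in> H" "g' \<in> H" and in_H: "dot (g * fst p, g * snd p) (g' * fst r, g' * snd r) \<in> H"
    using assms by (auto simp: G_adj_def H_orbit_def dot_def)
  moreover have "dot p r = dot (g * fst p, g * snd p) (g' * fst r, g' * snd r) / (g * g')"
    using \<open>g \<in> H\<close> \<open>g' \<in> H\<close> by (simp add: dot_def nonzero field_simps)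
  ultimately show ?thesis
    by (simp add: divide_in mult_in)
qed

lemma det2_ne_0_if_common_neighbour:
  assumes "p \<noteq> (0, 0)" and "H_orbit H p \<noteq> H_orbit H p'" and "dot p r \<in> H" "dot p' r \<in> H"
  shows "det2 p p' \<noteq> 0"
proof
  assume "det2 p p' = 0"
  then obtain l where l: "p' = (l * fst p, l * snd p)"
    using scalar_multiple_if_det2_eq_0 assms(1) by blast
  hence "l = dot p' r / dot p r"
    using assms(3) by (simp add: dot_def nonzero field_simps)
  hence "p' \<in> H_orbit H p"
    using l assms(3,4) divide_in by (auto simp: H_orbit_def)
  thus False
    using H_orbit_eq_if_mem assms(2) by metis
qed

lemma H_orbit_eq_if_dot_ratios_eq:
  assumes "det2 p\<^sub>1 p\<^sub>2 \<noteq> 0" and "dot p\<^sub>1 r \<in> H" "dot p\<^sub>1 r' \<in> H"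
    and "dot p\<^sub>2 r / dot p\<^sub>1 r = dot p\<^sub>2 r' / dot p\<^sub>1 r'"
  shows "H_orbit H r' = H_orbit H r"
proof -
  define c where "c = dot p\<^sub>1 r' / dot p\<^sub>1 r"
  have "dot p\<^sub>1 r' = c * dot p\<^sub>1 r" "dot p\<^sub>2 r' = c * dot p\<^sub>2 r"
    using assms by (simp_all add: c_def nonzero field_simps)
  hence "r' = (c * fst r, c * snd r)"
    using scaled_if_dots_scaled assms(1) by blast
  moreover have "c \<in> H"
    unfolding c_def using assms divide_in by blast
  ultimately show ?thesis
    by (intro H_orbit_eq_if_mem) (auto simp: H_orbit_def)
qed

lemma card_le_affine_preimage:
  assumes "finite H" and "det2 p\<^sub>1 p\<^sub>2 \<noteq> 0" and "inj_on (H_orbit H) R"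
    and dots_in: "\<And>r. r \<in> R \<Longrightarrow> dot p\<^sub>1 r \<in> H \<and> dot p\<^sub>2 r \<in> H \<and> dot p\<^sub>3 r \<in> H"
  shows "card R \<le> card {h \<in> H. det2 p\<^sub>3 p\<^sub>2 / det2 p\<^sub>1 p\<^sub>2 + det2 p\<^sub>1 p\<^sub>3 / det2 p\<^sub>1 p\<^sub>2 * h \<in> H}"
proof (rule card_inj_on_le)
  let ?ratio = "\<lambda>r. dot p\<^sub>2 r / dot p\<^sub>1 r"
  show "inj_on ?ratio R"
  proof (rule inj_onI)
    fix r r' assume "r \<in> R" "r' \<in> R" "?ratio r = ?ratio r'"
    hence "H_orbit H r' = H_orbit H r"
      using dots_in \<open>r \<in> R\<close> \<open>r' \<in> R\<close>
      by (intro H_orbit_eq_if_dot_ratios_eq[OF \<open>det2 p\<^sub>1 p\<^sub>2 \<noteq> 0\<close>]) simp_all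
    thus "r = r'"
      using \<open>inj_on (H_orbit H) R\<close> \<open>r \<in> R\<close> \<open>r' \<in> R\<close> by (simp add: inj_on_eq_iff)
  qed
  show "?ratio ` R \<subseteq> {h \<in> H. det2 p\<^sub>3 p\<^sub>2 / det2 p\<^sub>1 p\<^sub>2 + det2 p\<^sub>1 p\<^sub>3 / det2 p\<^sub>1 p\<^sub>2 * h \<in> H}"
  proof clarify
    fix r assume "r \<in> R"
    hence "dot p\<^sub>1 r \<noteq> 0"
      using dots_in nonzero by blast
    hence "det2 p\<^sub>3 p\<^sub>2 / det2 p\<^sub>1 p\<^sub>2 + det2 p\<^sub>1 p\<^sub>3 / det2 p\<^sub>1 p\<^sub>2 * ?ratio r = dot p\<^sub>3 r / dot p\<^sub>1 r"
      by (simp add: dot_Cramer[OF \<open>det2 p\<^sub>1 p\<^sub>2 \<noteq> 0\<close>, of p\<^sub>3 r] field_simps)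
    thus "?ratio r \<in> H \<and> det2 p\<^sub>3 p\<^sub>2 / det2 p\<^sub>1 p\<^sub>2 + det2 p\<^sub>1 p\<^sub>3 / det2 p\<^sub>1 p\<^sub>2 * ?ratio r \<in> H"
      using dots_in[OF \<open>r \<in> R\<close>] divide_in by simp
  qed
qed (use \<open>finite H\<close> in simp)

lemma card_common_neighbours_le:
  assumes "finite H" and "P \<subseteq> UNIV - {(0, 0)}" "inj_on (H_orbit H) P" "card P = 3"
    and "R \<noteq> {}" "inj_on (H_orbit H) R"
    and dots_in: "\<And>p r. p \<in> P \<Longrightarrow> r \<in> R \<Longrightarrow> dot p r \<in> H"
  shows "\<exists>\<alpha> \<beta>. \<alpha> \<noteq> 0 \<and> \<beta> \<noteq> 0 \<and> card R \<le> card {h \<in> H. \<alpha> + \<beta> * h \<in> H}"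
proof -
  obtain p\<^sub>1 p\<^sub>2 p\<^sub>3 where P: "P = {p\<^sub>1, p\<^sub>2, p\<^sub>3}" "p\<^sub>1 \<noteq> p\<^sub>2" "p\<^sub>1 \<noteq> p\<^sub>3" "p\<^sub>2 \<noteq> p\<^sub>3"
    using \<open>card P = 3\<close> unfolding card_3_iff by blast
  have "det2 p p' \<noteq> 0" if "p \<in> P" "p' \<in> P" "p \<noteq> p'" for p p'
  proof -
    obtain r where "r \<in> R"
      using \<open>R \<noteq> {}\<close> by blast
    moreover have "H_orbit H p \<noteq> H_orbit H p'"
      using \<open>inj_on (H_orbit H) P\<close> that inj_on_contraD by metis
    ultimately show ?thesis
      using det2_ne_0_if_common_neighbour \<open>P \<subseteq> _\<close> dots_in that by blast
  qed
  hence "det2 p\<^sub>1 p\<^sub>2 \<noteq> 0" "det2 p\<^sub>1 p\<^sub>3 \<noteq> 0" "det2 p\<^sub>3 p\<^sub>2 \<noteq> 0"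
    using P by auto
  moreover have "dot p\<^sub>1 r \<in> H \<and> dot p\<^sub>2 r \<in> H \<and> dot p\<^sub>3 r \<in> H" if "r \<in> R" for r
    using dots_in P that by simp
  ultimately show ?thesis
    using card_le_affine_preimage[OF \<open>finite H\<close> _ \<open>inj_on (H_orbit H) R\<close>]
    by (intro exI[of _ "det2 p\<^sub>3 p\<^sub>2 / det2 p\<^sub>1 p\<^sub>2"] exI[of _ "det2 p\<^sub>1 p\<^sub>3 / det2 p\<^sub>1 p\<^sub>2"]) simp
qed

end

theorem theorem5:
  fixes q t :: nat and H :: "'a::{field, finite} set"
  assumes q_pp: "\<exists>p k. prime p \<and> k \<ge> 1 \<and> q = p ^ k"
    and card_F: "card (UNIV :: 'a set) = q ^ 2"
    and t_pos: "t > 0"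
    and t_dvd: "t dvd (q - 1)"
    and H_sub: "H \<subseteq> UNIV - {0}"
    and H_one: "1 \<in> H"
    and H_mult: "\<And>x y. x \<in> H \<Longrightarrow> y \<in> H \<Longrightarrow> x * y \<in> H"
    and H_inv: "\<And>x. x \<in> H \<Longrightarrow> inverse x \<in> H"
    and H_card: "card H = t * (q + 1)"
  shows "K_free (G_vertices H) (G_adj H) 3 (2 * t ^ 2 + 1)"
proof -
  interpret mult_subgroup H
    using H_sub H_mult H_inv by unfold_locales auto
  obtain p k where "prime p" "q = p ^ k"
    using q_pp by blast
  hence additive: "\<And>x y :: 'a. (x + y) ^ q = x ^ q + y ^ q"
    using add_power_prime_power[of p "k * 2"] card_F by (simp add: power_mult)
  show ?thesis
    unfolding K_free_def
  proof (intro notI, elim exE conjE)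
    fix S U
    assume "S \<subseteq> G_vertices H" "U \<subseteq> G_vertices H" "card S = 3" "card U = 2 * t ^ 2 + 1"
      and adjacent: "\<forall>x\<in>S. \<forall>y\<in>U. G_adj H x y"
    then obtain P R where "P \<subseteq> UNIV - {(0, 0)}" "inj_on (H_orbit H) P" "S = H_orbit H ` P"
      and "R \<subseteq> UNIV - {(0, 0)}" "inj_on (H_orbit H) R" "U = H_orbit H ` R"
      unfolding G_vertices_eq subset_image_inj by blast
    moreover from this have "card P = 3" "card R = 2 * t ^ 2 + 1"
      using \<open>card S = 3\<close> \<open>card U = 2 * t ^ 2 + 1\<close> by (simp_all add: card_image)
    moreover have "dot p r \<in> H" if "p \<in> P" "r \<in> R" for p r
      using adjacent \<open>S = _\<close> \<open>U = _\<close> that dot_in_if_G_adj by blast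
    ultimately obtain \<alpha> \<beta> where "\<alpha> \<noteq> 0" "\<beta> \<noteq> 0" and "card R \<le> card {h \<in> H. \<alpha> + \<beta> * h \<in> H}"
      using card_common_neighbours_le[of P R] by fastforce
    moreover have "card {h \<in> H. \<alpha> + \<beta> * h \<in> H} \<le> 2 * t\<^sup>2"
      by (rule card_affine_preimage_le[OF additive zero_notin H_mult H_card t_pos \<open>\<alpha> \<noteq> 0\<close> \<open>\<beta> \<noteq> 0\<close>])
    ultimately show False
      using \<open>card R = 2 * t ^ 2 + 1\<close> by simp
  qed
qed

end
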